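(* Suppose $F(i)=(i+1/2)^a$ on $[-1/2,1/2]$ for some $a>0$. Fix $\sigma>0$, and for $Q\in(0,1/2)$ set $q_1=q_2=Q$, $q_H=\frac{(1-2Q)\sigma}{1+\sigma}$, $q_L=\frac{1-2Q}{1+\sigma}$ (so $\sigma=q_H/q_L$). Then, as $Q\to0$ (that is, for all sufficiently small $Q>0$), the value $V(R)$ as a function of $R\in(0,1)$ is (i) decreasing in $R$ if $\sigma\le\min\left\{\frac{1-Q(a+1)}{a-Q(a+1)},\frac{a-Q(a+1)}{1-Q(a+1)}\right\}$; (ii) increasing in $R$ if $\sigma\ge\max\left\{\frac{1-Q(a+1)}{a-Q(a+1)},\frac{a-Q(a+1)}{1-Q(a+1)}\right\}$; (iii) maximized at some $R^*\in(0,1)$ otherwise.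
   Context: Setting. Consumer types are $i\in[-1/2,1/2]$, distributed according to a continuous cumulative distribution function $F$ with full support on $[-1/2,1/2]$. A product has a quality vector $(Q_1,Q_2)\in\{0,1\}^2$; a type-$i$ consumer gets payoff $(1/2+i)Q_1+(1/2-i)Q_2$ from it. The versions $(1,1),(1,0),(0,1),(0,0)$ have prior probabilities $q_H,q_1,q_2,q_L$ respectively, all strictly positive and summing to $1$. One product carries a recommendation from a sender whose type is drawn from $F$ independently of the product; given a threshold $R\in(0,1)$, the sender gives a buy recommendation $B$ if her payoff from the product is at least $R$ and a don't-buy recommendation $D$ otherwise. Let $\phi_1(R)=1-F(R-1/2)$, $\phi_2(R)=F(1/2-R)$, $\pi^B=q_H+q_1\phi_1(R)+q_2\phi_2(R)$, $\pi^D=1-\pi^B$. Posteriors: $p^B_H=q_H/\pi^B$, $p^B_1=q_1\phi_1(R)/\pi^B$, $p^B_2=q_2\phi_2(R)/\pi^B$, $p^B_L=0$; $p^D_H=0$, $p^D_1=q_1(1-\phi_1(R))/\pi^D$, $p^D_2=q_2(1-\phi_2(R))/\pi^D$, $p^D_L=q_L/\pi^D$. For $r\in\{B,D\}$ let $U_i^r=p_H^r+(1/2+i)p_1^r+(1/2-i)p_2^r$ and $U_i^0=q_H+(1/2+i)q_1+(1/2-i)q_2$. The value of the recommendation system is $V(R)=\pi^B\int_{-1/2}^{1/2}\max\{U_i^B-U_i^0,0\}\,dF(i)+\pi^D\int_{-1/2}^{1/2}\max\{U_i^D-U_i^0,0\}\,dF(i)$. *)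

theory Defs
  imports "HOL-Analysis.Analysis"
begin

text \<open>Consumer/sender types live in [-1/2,1/2]; the CDF F is extended by 0 below
  and 1 above. Integration dF(i) is against the Lebesgue-Stieltjes measure of F.\<close>

definition phi1 :: "(real \<Rightarrow> real) \<Rightarrow> real \<Rightarrow> real" where
  "phi1 F R = 1 - F (R - 1/2)"

definition phi2 :: "(real \<Rightarrow> real) \<Rightarrow> real \<Rightarrow> real" where
  "phi2 F R = F (1/2 - R)"

definition piB :: "(real \<Rightarrow> real) \<Rightarrow> real \<Rightarrow> real \<Rightarrow> real \<Rightarrow> real \<Rightarrow> real" where
  "piB F qH q1 q2 R = qH + q1 * phi1 F R + q2 * phi2 F R"

definition piD :: "(real \<Rightarrow> real) \<Rightarrow> real \<Rightarrow> real \<Rightarrow> real \<Rightarrow> real \<Rightarrow> real" where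
  "piD F qH q1 q2 R = 1 - piB F qH q1 q2 R"

definition UB :: "(real \<Rightarrow> real) \<Rightarrow> real \<Rightarrow> real \<Rightarrow> real \<Rightarrow> real \<Rightarrow> real \<Rightarrow> real" where
  "UB F qH q1 q2 R i =
     (let p = piB F qH q1 q2 R;
          pH = qH / p; p1 = q1 * phi1 F R / p; p2 = q2 * phi2 F R / p
      in pH + (1/2 + i) * p1 + (1/2 - i) * p2)"

definition UD :: "(real \<Rightarrow> real) \<Rightarrow> real \<Rightarrow> real \<Rightarrow> real \<Rightarrow> real \<Rightarrow> real \<Rightarrow> real" where
  "UD F qH q1 q2 R i =
     (let p = piD F qH q1 q2 R;
          pH = 0; p1 = q1 * (1 - phi1 F R) / p; p2 = q2 * (1 - phi2 F R) / p
      in pH + (1/2 + i) * p1 + (1/2 - i) * p2)"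

definition U0 :: "real \<Rightarrow> real \<Rightarrow> real \<Rightarrow> real \<Rightarrow> real" where
  "U0 qH q1 q2 i = qH + (1/2 + i) * q1 + (1/2 - i) * q2"

definition rec_value :: "(real \<Rightarrow> real) \<Rightarrow> real \<Rightarrow> real \<Rightarrow> real \<Rightarrow> real \<Rightarrow> real" where
  "rec_value F qH q1 q2 R =
     piB F qH q1 q2 R *
       set_lebesgue_integral (interval_measure F) {-1/2..1/2}
         (\<lambda>i. max (UB F qH q1 q2 R i - U0 qH q1 q2 i) 0)
   + piD F qH q1 q2 R *
       set_lebesgue_integral (interval_measure F) {-1/2..1/2}
         (\<lambda>i. max (UD F qH q1 q2 R i - U0 qH q1 q2 i) 0)"

definition power_cdf :: "real \<Rightarrow> real \<Rightarrow> real" where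
  "power_cdf a x = (if x < -1/2 then 0 else if x > 1/2 then 1 else (x + 1/2) powr a)"

end

theory Submission
  imports Defs "HOL-Probability.Probability"
begin

text \<open>
  For small \<open>Q\<close> the prior satisfies \<open>(qH + 2Q)(qH + Q) \<le> qH\<close>. Then every consumer type
  weakly gains from following a buy recommendation and weakly loses from following a don't-buy
  recommendation, so only the buy term of \<open>V\<close> survives. That gain is affine in the type \<open>i\<close>,
  so only the mean \<open>a/(a+1) - 1/2\<close> of \<open>F\<close> enters; it is computed by realising \<open>F\<close> as the law
  of \<open>U powr (1/a) - 1/2\<close> for \<open>U\<close> uniform on \<open>[0,1]\<close>. The result is
  \<open>V(R) = K + Q c\<^sub>2 (1 - R)\<^sup>a - Q c\<^sub>1 R\<^sup>a\<close> with \<open>c\<^sub>1 = a/(a+1) - qH - Q\<close> and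
  \<open>c\<^sub>2 = 1/(a+1) - qH - Q\<close>, whose signs are those of \<open>t\<^sub>2 - \<sigma>\<close> and \<open>t\<^sub>1 - \<sigma>\<close>. If they have opposite signs,
  then \<open>a \<noteq> 1\<close> because \<open>c\<^sub>1 - c\<^sub>2 = (a - 1)/(a + 1)\<close>, and at distance \<open>S\<close> from either end
  of \<open>[0,1]\<close> the lower-order of the terms \<open>S\<close> and \<open>S\<^sup>a\<close> carries the favourable sign and
  dominates, so the maximum lies in the interior.
\<close>

lemma powr_le_powr_iff:
  fixes x y a :: real
  assumes "0 < a" "0 \<le> x" "0 \<le> y"
  shows "x powr a \<le> y powr a \<longleftrightarrow> x \<le> y"
  using assms by (meson not_le powr_less_mono2 powr_mono2 less_imp_le)

lemma power_cdf_eq_clamp: "power_cdf a x = max 0 (min 1 (x + 1/2)) powr a"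
  by (auto simp: power_cdf_def)

lemma power_cdf_nonneg: "0 \<le> power_cdf a x"
  by (simp add: power_cdf_def)

lemma power_cdf_le_one:
  assumes "a > 0" shows "power_cdf a x \<le> 1"
  unfolding power_cdf_eq_clamp using assms by (intro powr_le1) auto

lemma power_cdf_mono:
  assumes "a > 0" "x \<le> y"
  shows "power_cdf a x \<le> power_cdf a y"
  unfolding power_cdf_eq_clamp using assms by (intro powr_mono2) auto

lemma continuous_on_power_cdf:
  assumes "a > 0"
  shows "continuous_on UNIV (power_cdf a)"
proof -
  have "continuous_on UNIV (\<lambda>x. max 0 (min 1 (x + 1/2)) powr a)"
    using assms by (intro continuous_on_powr' continuous_intros) auto
  then show ?thesis
    by (simp add: power_cdf_eq_clamp)
qed

lemma power_cdf_at_bot: "(power_cdf a \<longlongrightarrow> 0) at_bot"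
  by (rule tendsto_eventually) (auto simp: eventually_at_bot_linorder power_cdf_def intro!: exI[of _ "-1"])

lemma power_cdf_at_top: "(power_cdf a \<longlongrightarrow> 1) at_top"
  by (rule tendsto_eventually) (auto simp: eventually_at_top_linorder power_cdf_def intro!: exI[of _ 1])

definition power_quantile :: "real \<Rightarrow> real \<Rightarrow> real" where
  "power_quantile a u = u powr (1/a) - 1/2"

lemma borel_measurable_power_quantile[measurable]: "power_quantile a \<in> borel_measurable borel"
  unfolding power_quantile_def by measurable

lemma power_quantile_le_iff:
  assumes "a > 0" "u \<in> {0..1}" "-1/2 \<le> x"
  shows "power_quantile a u \<le> x \<longleftrightarrow> u \<le> power_cdf a x"
proof (cases "x \<le> 1/2")
  case True
  have "u powr (1/a) \<le> x + 1/2 \<longleftrightarrow> (u powr (1/a)) powr a \<le> (x + 1/2) powr a"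
    using assms by (intro powr_le_powr_iff[symmetric]) auto
  then show ?thesis
    using assms True by (auto simp: power_quantile_def power_cdf_def powr_powr)
next
  case False
  have "u powr (1/a) \<le> 1"
    using assms by (intro powr_le1) auto
  then show ?thesis
    using assms False by (simp add: power_quantile_def power_cdf_def)
qed

lemma cdf_distr_power_quantile:
  assumes "a > 0"
  shows "cdf (distr (uniform_measure lborel {0..1}) borel (power_quantile a)) x = power_cdf a x"
proof -
  have "cdf (distr (uniform_measure lborel {0..1}) borel (power_quantile a)) x
      = measure lborel ({0..1} \<inter> power_quantile a -` {..x})"
    using measurable_sets_borel[OF borel_measurable_power_quantile atMost_borel]
    by (subst cdf_def, subst measure_distr) auto
  also have "\<dots> = power_cdf a x"
  proof (cases "x < -1/2")
    case True
    have "-1/2 \<le> power_quantile a u" for u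
      by (simp add: power_quantile_def)
    with True have "{0..1} \<inter> power_quantile a -` {..x} = {}"
      by (meson disjoint_iff order.trans not_le vimage_eq atMost_iff)
    then show ?thesis
      using True by (simp add: power_cdf_def)
  next
    case False
    then have "{0..1} \<inter> power_quantile a -` {..x} = {0..power_cdf a x}"
      using power_quantile_le_iff[OF assms] power_cdf_le_one[OF assms, of x] by auto
    then show ?thesis
      by (simp add: power_cdf_nonneg)
  qed
  finally show ?thesis .
qed

lemma interval_measure_power_cdf:
  assumes "a > 0"
  shows "interval_measure (power_cdf a) = distr (uniform_measure lborel {0..1}) borel (power_quantile a)"
proof (rule cdf_unique)
  have "continuous (at_right x) (power_cdf a)" for x
    using continuous_on_power_cdf[OF assms]
    by (metis continuous_on_eq_continuous_within continuous_within_subset subset_UNIV UNIV_I)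
  note cdf_props = power_cdf_mono[OF assms] this power_cdf_at_bot
  show "real_distribution (interval_measure (power_cdf a))"
    using cdf_props power_cdf_at_top by (intro real_distribution_interval_measure)
  interpret uniform: prob_space "uniform_measure lborel {0..1::real}"
    by (rule prob_space_uniform_measure) auto
  show "real_distribution (distr (uniform_measure lborel {0..1}) borel (power_quantile a))"
    unfolding power_quantile_def by (rule uniform.real_distribution_distr) simp
  show "cdf (interval_measure (power_cdf a)) = cdf (distr (uniform_measure lborel {0..1}) borel (power_quantile a))"
    using cdf_props cdf_distr_power_quantile[OF assms] by (simp add: cdf_interval_measure fun_eq_iff)
qed

lemma integral_uniform_measure_unit_interval:
  fixes f :: "real \<Rightarrow> real"
  assumes "continuous_on {0..1} f" and [measurable]: "f \<in> borel_measurable borel"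
  shows "(\<integral>u. f u \<partial>uniform_measure lborel {0..1}) = integral {0..1} f"
proof -
  have "uniform_measure lborel {0..1::real} = density lborel (\<lambda>u. ennreal (indicator {0..1} u))"
    by (simp add: uniform_measure_def ennreal_indicator divide_ennreal_def)
  then have "(\<integral>u. f u \<partial>uniform_measure lborel {0..1}) = (LINT u:{0..1}|lborel. f u)"
    unfolding set_lebesgue_integral_def by (simp add: integral_density)
  also have "\<dots> = integral {0..1} f"
    using borel_integrable_compact[OF compact_Icc assms(1)]
    by (intro set_borel_integral_eq_integral) (simp add: set_integrable_def)
  finally show ?thesis .
qed

lemma set_integral_affine_power_cdf:
  assumes "a > 0"
  shows "(LINT i:{-1/2..1/2}|interval_measure (power_cdf a). c + d * i) = c + d * (a/(a+1) - 1/2)"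
proof -
  let ?U = "uniform_measure lborel {0..1::real}"
  have "(LINT i:{-1/2..1/2}|interval_measure (power_cdf a). c + d * i)
      = (\<integral>u. indicator {-1/2..1/2} (power_quantile a u) * (c + d * power_quantile a u) \<partial>?U)"
    unfolding set_lebesgue_integral_def interval_measure_power_cdf[OF assms]
    by (subst integral_distr) auto
  also have "\<dots> = (\<integral>u. (c - d/2) + d * u powr (1/a) \<partial>?U)"
  proof (rule integral_cong_AE)
    have "power_quantile a u \<in> {-1/2..1/2}" if "u \<in> {0..1}" for u
      using that assms powr_le1[of "1/a" u] by (simp add: power_quantile_def)
    then show "AE u in ?U. indicator {-1/2..1/2} (power_quantile a u) * (c + d * power_quantile a u)
        = (c - d/2) + d * u powr (1/a)"
      by (subst AE_uniform_measure) (auto simp: power_quantile_def algebra_simps)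
  qed (auto simp: power_quantile_def)
  also have "\<dots> = integral {0..1} (\<lambda>u. (c - d/2) + d * u powr (1/a))"
    using assms by (intro integral_uniform_measure_unit_interval continuous_intros continuous_on_powr') auto
  also have "\<dots> = c + d * (a/(a+1) - 1/2)"
  proof (rule integral_unique)
    have "((\<lambda>u. u powr (1/a)) has_integral a/(a+1)) {0..1}"
      using has_integral_powr_from_0[of "1/a" 1] assms by (simp add: field_simps)
    then have "((\<lambda>u. (c - d/2) + d * u powr (1/a)) has_integral (c - d/2) * 1 + d * (a/(a+1))) {0..1}"
      by (intro has_integral_add has_integral_mult_right) (auto intro: has_integral_const_real[of _ 0 1, simplified])
    then show "((\<lambda>u. (c - d/2) + d * u powr (1/a)) has_integral c + d * (a/(a+1) - 1/2)) {0..1}"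
      by (simp add: algebra_simps)
  qed
  finally show ?thesis .
qed

lemma posterior_gains_balance:
  assumes "piB F qH q1 q2 R \<noteq> 0" "piD F qH q1 q2 R \<noteq> 0"
  shows "piB F qH q1 q2 R * (UB F qH q1 q2 R i - U0 qH q1 q2 i)
       + piD F qH q1 q2 R * (UD F qH q1 q2 R i - U0 qH q1 q2 i) = 0"
proof -
  have "piB F qH q1 q2 R * UB F qH q1 q2 R i = qH + (1/2 + i) * q1 * phi1 F R + (1/2 - i) * q2 * phi2 F R"
    using assms(1) by (simp add: UB_def Let_def field_simps)
  moreover have "piD F qH q1 q2 R * UD F qH q1 q2 R i
      = (1/2 + i) * q1 * (1 - phi1 F R) + (1/2 - i) * q2 * (1 - phi2 F R)"
    using assms(2) by (simp add: UD_def Let_def field_simps)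
  ultimately show ?thesis
    by (simp add: right_diff_distrib piD_def) (simp add: piB_def U0_def algebra_simps)
qed

lemma phi_in_unit_interval:
  assumes "range F \<subseteq> {0..1}"
  shows "phi1 F R \<in> {0..1}" "phi2 F R \<in> {0..1}"
  using assms by (auto simp: phi1_def phi2_def image_subset_iff)

lemma piB_symmetric_bounds:
  assumes "range F \<subseteq> {0..1}" "0 \<le> Q"
  shows "qH \<le> piB F qH Q Q R" "piB F qH Q Q R \<le> qH + 2*Q"
  using phi_in_unit_interval[OF assms(1), of R] assms(2)
    mult_left_le[of "phi1 F R" Q] mult_left_le[of "phi2 F R" Q]
  by (auto simp: piB_def)

lemma buy_gain_symmetric:
  assumes "piB F qH Q Q R \<noteq> 0"
  shows "piB F qH Q Q R * (UB F qH Q Q R i - U0 qH Q Q i)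
       = qH + Q * ((1/2 + i) * phi1 F R + (1/2 - i) * phi2 F R) - piB F qH Q Q R * (qH + Q)"
  using assms unfolding UB_def U0_def Let_def
  by (simp add: right_diff_distrib distrib_left add_divide_distrib) (simp add: algebra_simps)

lemma U0_le_UB_symmetric:
  assumes F: "range F \<subseteq> {0..1}" and "0 < qH" "0 < Q" "(qH + 2*Q) * (qH + Q) \<le> qH"
    and i: "i \<in> {-1/2..1/2}"
  shows "U0 qH Q Q i \<le> UB F qH Q Q R i"
proof -
  let ?p = "piB F qH Q Q R"
  have p: "qH \<le> ?p" "?p \<le> qH + 2*Q"
    using piB_symmetric_bounds[OF F] assms by auto
  have "0 \<le> Q * ((1/2 + i) * phi1 F R + (1/2 - i) * phi2 F R)"
    using phi_in_unit_interval[OF F, of R] assms by auto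
  moreover have "?p * (qH + Q) \<le> (qH + 2*Q) * (qH + Q)"
    using p assms by (intro mult_right_mono) auto
  ultimately have "0 \<le> ?p * (UB F qH Q Q R i - U0 qH Q Q i)"
    using buy_gain_symmetric[of F qH Q R i] p assms(2,4) by linarith
  then show ?thesis
    using p assms by (simp add: zero_le_mult_iff)
qed

lemma UD_le_U0_symmetric:
  assumes F: "range F \<subseteq> {0..1}" and "0 < qH" "0 < Q" "qH + 2*Q < 1"
    and "(qH + 2*Q) * (qH + Q) \<le> qH" and i: "i \<in> {-1/2..1/2}"
  shows "UD F qH Q Q R i \<le> U0 qH Q Q i"
proof -
  have pB: "0 < piB F qH Q Q R" and pD: "0 < piD F qH Q Q R"
    using piB_symmetric_bounds[OF F, of Q qH R] assms by (auto simp: piD_def)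
  have "0 \<le> piB F qH Q Q R * (UB F qH Q Q R i - U0 qH Q Q i)"
    using U0_le_UB_symmetric[OF assms(1-3,5) i] pB by simp
  then have "piD F qH Q Q R * (UD F qH Q Q R i - U0 qH Q Q i) \<le> 0"
    using posterior_gains_balance[of F qH Q Q R i] pB pD by linarith
  then show ?thesis
    using pD by (simp add: mult_le_0_iff)
qed

lemma rec_value_symmetric:
  assumes F: "range F \<subseteq> {0..1}" and "0 < qH" "0 < Q" "qH + 2*Q < 1"
    and "(qH + 2*Q) * (qH + Q) \<le> qH"
  shows "rec_value F qH Q Q R = (LINT i:{-1/2..1/2}|interval_measure F.
           qH + Q * ((1/2 + i) * phi1 F R + (1/2 - i) * phi2 F R) - piB F qH Q Q R * (qH + Q))"
proof -
  let ?S = "{-1/2..1/2::real}" and ?M = "interval_measure F" and ?p = "piB F qH Q Q R"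
  have "?p \<noteq> 0"
    using piB_symmetric_bounds[OF F, of Q qH R] assms by auto
  have buy: "(LINT i:?S|?M. max (UB F qH Q Q R i - U0 qH Q Q i) 0)
      = (LINT i:?S|?M. UB F qH Q Q R i - U0 qH Q Q i)"
    using U0_le_UB_symmetric[OF assms(1-3,5)] by (intro set_lebesgue_integral_cong) auto
  have dont_buy: "(LINT i:?S|?M. max (UD F qH Q Q R i - U0 qH Q Q i) 0) = (LINT i:?S|?M. 0)"
    using UD_le_U0_symmetric[OF assms] by (intro set_lebesgue_integral_cong) auto
  have "rec_value F qH Q Q R = (LINT i:?S|?M. ?p * (UB F qH Q Q R i - U0 qH Q Q i))"
    unfolding rec_value_def buy dont_buy by (simp add: set_lebesgue_integral_def)
  also have "\<dots> = (LINT i:?S|?M. qH + Q * ((1/2 + i) * phi1 F R + (1/2 - i) * phi2 F R) - ?p * (qH + Q))"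
    using buy_gain_symmetric[OF \<open>?p \<noteq> 0\<close>] by (intro set_lebesgue_integral_cong) auto
  finally show ?thesis .
qed

lemma rec_value_power_cdf:
  assumes "0 < a" "0 < qH" "0 < Q" "qH + 2*Q < 1" "(qH + 2*Q) * (qH + Q) \<le> qH" and R: "R \<in> {0..1}"
  shows "rec_value (power_cdf a) qH Q Q R = qH * (1 - qH - Q) + Q * (a/(a+1) - qH - Q)
           + Q * (1/(a+1) - qH - Q) * (1 - R) powr a - Q * (a/(a+1) - qH - Q) * R powr a"
proof -
  let ?F = "power_cdf a"
  define x y where "x = phi1 ?F R" and "y = phi2 ?F R"
  have xy: "x = 1 - R powr a" "y = (1 - R) powr a"
    using R by (auto simp: x_def y_def phi1_def phi2_def power_cdf_def)
  have F: "range ?F \<subseteq> {0..1}"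
    using power_cdf_nonneg power_cdf_le_one[OF assms(1)] by auto
  have "rec_value ?F qH Q Q R = (LINT i:{-1/2..1/2}|interval_measure ?F.
           (qH + Q * (x + y)/2 - (qH + Q*x + Q*y) * (qH + Q)) + Q * (x - y) * i)"
    unfolding rec_value_symmetric[OF F assms(2-5)]
    by (intro set_lebesgue_integral_cong) (auto simp: x_def y_def piB_def algebra_simps)
  also have "\<dots> = qH + Q * (x + y)/2 - (qH + Q*x + Q*y) * (qH + Q) + Q * (x - y) * (a/(a+1) - 1/2)"
    by (rule set_integral_affine_power_cdf[OF assms(1)])
  also have "\<dots> = qH * (1 - qH - Q) + Q * x * (a/(a+1) - qH - Q) + Q * y * (1/(a+1) - qH - Q)"
  proof -
    define m where "m = a/(a+1)"
    have inv: "1/(a+1) = 1 - m"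
      using assms(1) by (simp add: m_def field_simps)
    show ?thesis
      unfolding m_def[symmetric] inv by (simp add: field_simps)
  qed
  finally show ?thesis
    by (simp add: xy algebra_simps)
qed

lemma antimono_on_powr_profile:
  fixes a b c K :: real
  assumes "0 \<le> a" "0 \<le> b" "0 \<le> c"
  shows "antimono_on {0..1} (\<lambda>R. K + b * (1 - R) powr a - c * R powr a)"
  unfolding monotone_on_def
proof (intro ballI impI)
  fix r s :: real
  assume "r \<in> {0..1}" "s \<in> {0..1}" "r \<le> s"
  then have "(1 - s) powr a \<le> (1 - r) powr a" "r powr a \<le> s powr a"
    using assms by (auto intro: powr_mono2)
  then show "K + b * (1 - s) powr a - c * s powr a \<le> K + b * (1 - r) powr a - c * r powr a"
    using assms mult_left_mono by (smt (verit))
qed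

lemma mono_on_powr_profile:
  fixes a b c K :: real
  assumes "0 \<le> a" "b \<le> 0" "c \<le> 0"
  shows "mono_on {0..1} (\<lambda>R. K + b * (1 - R) powr a - c * R powr a)"
  unfolding monotone_on_def
proof (intro ballI impI)
  fix r s :: real
  assume "r \<in> {0..1}" "s \<in> {0..1}" "r \<le> s"
  then have "(1 - s) powr a \<le> (1 - r) powr a" "r powr a \<le> s powr a"
    using assms by (auto intro: powr_mono2)
  then show "K + b * (1 - r) powr a - c * r powr a \<le> K + b * (1 - s) powr a - c * s powr a"
    using assms mult_left_mono_neg by (smt (verit))
qed

lemma eventually_powr_less_linear:
  fixes a c k :: real
  assumes "1 < a" "0 < k"
  shows "\<forall>\<^sub>F S in at_right 0. c * S powr a < k * S"
proof -
  have "((\<lambda>S. S powr (a - 1)) \<longlongrightarrow> 0) (at_right 0)"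
    using assms(1) eventually_at_right_less[of "0::real"]
    by (intro tendsto_zero_powrI tendsto_ident_at tendsto_const) (auto elim: eventually_mono)
  then have "((\<lambda>S. c * S powr (a - 1)) \<longlongrightarrow> c * 0) (at_right 0)"
    by (rule tendsto_mult_left)
  then have "\<forall>\<^sub>F S in at_right 0. c * S powr (a - 1) < k"
    by (rule order_tendstoD) (use assms(2) in simp)
  then show ?thesis
    using eventually_at_right_less[of "0::real"]
  proof eventually_elim
    case (elim S)
    have "S powr a = S * S powr (a - 1)"
      using elim powr_add[of S 1 "a - 1"] by simp
    moreover have "S * (c * S powr (a - 1)) < S * k"
      using elim by (intro mult_strict_left_mono) auto
    ultimately show ?case
      by (simp add: algebra_simps)
  qed
qed

lemma eventually_linear_less_powr:
  fixes a b k :: real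
  assumes "a < 1" "0 < k"
  shows "\<forall>\<^sub>F S in at_right 0. b * S < k * S powr a"
proof -
  have "((\<lambda>S. S powr (1 - a)) \<longlongrightarrow> 0) (at_right 0)"
    using assms(1) eventually_at_right_less[of "0::real"]
    by (intro tendsto_zero_powrI tendsto_ident_at tendsto_const) (auto elim: eventually_mono)
  then have "((\<lambda>S. b * S powr (1 - a)) \<longlongrightarrow> b * 0) (at_right 0)"
    by (rule tendsto_mult_left)
  then have "\<forall>\<^sub>F S in at_right 0. b * S powr (1 - a) < k"
    by (rule order_tendstoD) (use assms(2) in simp)
  then show ?thesis
    using eventually_at_right_less[of "0::real"]
  proof eventually_elim
    case (elim S)
    have "S powr a * S powr (1 - a) = S"
      using elim by (simp flip: powr_add)
    then have "b * S = S powr a * (b * S powr (1 - a))"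
      by (metis mult.left_commute)
    also have "\<dots> < S powr a * k"
      using elim by (intro mult_strict_left_mono) auto
    finally show ?case
      by (simp add: algebra_simps)
  qed
qed

text \<open>Split \<open>b (1 - S)\<^sup>a - c S\<^sup>a - b\<close> into the curvature term \<open>b ((1 - S)\<^sup>a - (1 - S))\<close>,
  which is nonnegative under either sign pattern, and \<open>-b S - c S\<^sup>a\<close>, which is positive for small \<open>S\<close>.\<close>

lemma powr_profile_exceeds_left_end:
  fixes a b c :: real
  assumes "(0 < c \<and> b < 0 \<and> 1 < a) \<or> (c < 0 \<and> 0 < b \<and> a < 1)"
  shows "\<exists>S\<in>{0<..<1}. b < b * (1 - S) powr a - c * S powr a"
proof -
  consider (convex) "0 < c" "b < 0" "1 < a" | (concave) "c < 0" "0 < b" "a < 1"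
    using assms by blast
  note cases = this
  have curvature: "0 \<le> b * ((1 - S) powr a - (1 - S))" if "S \<in> {0<..<1}" for S
  proof (cases rule: cases)
    case convex
    then have "(1 - S) powr a \<le> 1 - S"
      using that by (intro powr_le_one_le) auto
    then show ?thesis
      using convex by (simp add: mult_nonpos_nonpos)
  next
    case concave
    then have "(1 - S) powr 1 \<le> (1 - S) powr a"
      using that by (intro powr_mono') auto
    then show ?thesis
      using concave that by simp
  qed
  have "\<forall>\<^sub>F S in at_right 0. c * S powr a < - b * S"
  proof (cases rule: cases)
    case convex
    then show ?thesis
      by (intro eventually_powr_less_linear) auto
  next
    case concave
    then show ?thesis
      using eventually_linear_less_powr[of a "- c" b] by (auto elim: eventually_mono)
  qed
  moreover have "\<forall>\<^sub>F S in at_right 0. S \<in> {0<..<1::real}"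
    by (rule eventually_at_right_real) simp
  ultimately have "\<forall>\<^sub>F S in at_right 0. c * S powr a < - b * S \<and> S \<in> {0<..<1}"
    by (rule eventually_conj)
  then obtain S where S: "S \<in> {0<..<1}" "c * S powr a < - b * S"
    using eventually_happens'[OF trivial_limit_at_right_real] by blast
  have "b * (1 - S) powr a - c * S powr a - b = b * ((1 - S) powr a - (1 - S)) - b * S - c * S powr a"
    by (simp add: algebra_simps)
  then show ?thesis
    using S curvature[OF S(1)] by (intro bexI[OF _ S(1)]) linarith
qed

lemma powr_profile_interior_max:
  fixes a b c K :: real
  assumes "0 < a" and signs: "(0 < c \<and> b < 0 \<and> 1 < a) \<or> (c < 0 \<and> 0 < b \<and> a < 1)"
  shows "\<exists>Rs\<in>{0<..<1}. \<forall>R\<in>{0..1}.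
           K + b * (1 - R) powr a - c * R powr a \<le> K + b * (1 - Rs) powr a - c * Rs powr a"
proof -
  define h where "h R = K + b * (1 - R) powr a - c * R powr a" for R
  have "continuous_on {0..1} h"
    unfolding h_def using assms(1) by (intro continuous_intros continuous_on_powr') auto
  then obtain Rs where Rs: "Rs \<in> {0..1}" "\<forall>R\<in>{0..1}. h R \<le> h Rs"
    using continuous_attains_sup[of "{0..1}" h] by auto
  obtain S0 where S0: "S0 \<in> {0<..<1}" "b < b * (1 - S0) powr a - c * S0 powr a"
    using powr_profile_exceeds_left_end[OF signs] by blast
  txt \<open>The right end is the left end of the reflected profile \<open>R \<mapsto> 1 - R\<close>, whose
    coefficients are \<open>-c\<close> and \<open>-b\<close>.\<close>
  have "(0 < - b \<and> - c < 0 \<and> 1 < a) \<or> (- b < 0 \<and> 0 < - c \<and> a < 1)"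
    using signs by auto
  from powr_profile_exceeds_left_end[OF this]
  obtain S1 where S1: "S1 \<in> {0<..<1}" "- c < - c * (1 - S1) powr a - - b * S1 powr a"
    by blast
  have "h 0 < h S0" "h 1 < h (1 - S1)"
    using S0(2) S1(2) by (simp_all add: h_def)
  have "h S0 \<le> h Rs" "h (1 - S1) \<le> h Rs"
    using Rs(2) S0(1) S1(1) by auto
  with \<open>h 0 < h S0\<close> \<open>h 1 < h (1 - S1)\<close> have "Rs \<noteq> 0" "Rs \<noteq> 1"
    by auto
  then show ?thesis
    using Rs unfolding h_def by (intro bexI[of _ Rs]) auto
qed

lemma powr_profile_shape:
  fixes a b c K :: real and V :: "real \<Rightarrow> real"
  assumes "0 < a" and V: "\<forall>R\<in>{0<..<1}. V R = K + b * (1 - R) powr a - c * R powr a"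
  shows "0 \<le> b \<Longrightarrow> 0 \<le> c \<Longrightarrow> antimono_on {0<..<1} V"
    and "b \<le> 0 \<Longrightarrow> c \<le> 0 \<Longrightarrow> mono_on {0<..<1} V"
    and "(0 < c \<and> b < 0 \<and> 1 < a) \<or> (c < 0 \<and> 0 < b \<and> a < 1) \<Longrightarrow>
           \<exists>Rs\<in>{0<..<1}. \<forall>R\<in>{0<..<1}. V R \<le> V Rs"
proof -
  define profile where "profile R = K + b * (1 - R) powr a - c * R powr a" for R
  have sub: "{0<..<1} \<subseteq> {0..1::real}"
    by auto
  show "antimono_on {0<..<1} V" if "0 \<le> b" "0 \<le> c"
  proof -
    have "antimono_on {0<..<1} profile"
      unfolding profile_def using assms(1) that
      by (intro monotone_on_subset[OF antimono_on_powr_profile sub]) auto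
    then show ?thesis
      using V by (simp add: monotone_on_def profile_def)
  qed
  show "mono_on {0<..<1} V" if "b \<le> 0" "c \<le> 0"
  proof -
    have "mono_on {0<..<1} profile"
      unfolding profile_def using assms(1) that
      by (intro monotone_on_subset[OF mono_on_powr_profile sub]) auto
    then show ?thesis
      using V by (simp add: monotone_on_def profile_def)
  qed
  show "\<exists>Rs\<in>{0<..<1}. \<forall>R\<in>{0<..<1}. V R \<le> V Rs"
    if signs: "(0 < c \<and> b < 0 \<and> 1 < a) \<or> (c < 0 \<and> 0 < b \<and> a < 1)"
  proof -
    obtain Rs where "Rs \<in> {0<..<1}" "\<forall>R\<in>{0..1}. profile R \<le> profile Rs"
      using powr_profile_interior_max[OF assms(1) signs, of K] unfolding profile_def by blast
    then show ?thesis
      using V by (intro bexI[of _ Rs]) (auto simp: profile_def)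
  qed
qed

lemma sign_of_scaled_eq:
  fixes A B P c \<sigma> :: real
  assumes "0 < B" "0 < P" "P * c = A - \<sigma> * B"
  shows "0 \<le> c \<longleftrightarrow> \<sigma> \<le> A / B" and "0 < c \<longleftrightarrow> \<sigma> < A / B"
proof -
  have "0 \<le> c \<longleftrightarrow> 0 \<le> P * c" "0 < c \<longleftrightarrow> 0 < P * c"
    using assms(2) by (simp_all add: zero_le_mult_iff zero_less_mult_iff)
  then show "0 \<le> c \<longleftrightarrow> \<sigma> \<le> A / B" "0 < c \<longleftrightarrow> \<sigma> < A / B"
    using assms(1) unfolding assms(3) by (simp_all add: le_divide_eq less_divide_eq)
qed

lemma profile_coefficient_signs:
  fixes a \<sigma> Q :: real
  defines "qH \<equiv> (1 - 2*Q) * \<sigma> / (1 + \<sigma>)"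
    and "t1 \<equiv> (1 - Q*(a+1)) / (a - Q*(a+1))" and "t2 \<equiv> (a - Q*(a+1)) / (1 - Q*(a+1))"
  assumes a: "0 < a" and \<sigma>: "0 < \<sigma>" and Q: "Q*(a+1) < a" "Q*(a+1) < 1"
  shows "0 \<le> a/(a+1) - qH - Q \<longleftrightarrow> \<sigma> \<le> t2" and "0 < a/(a+1) - qH - Q \<longleftrightarrow> \<sigma> < t2"
    and "0 \<le> 1/(a+1) - qH - Q \<longleftrightarrow> \<sigma> \<le> t1" and "0 < 1/(a+1) - qH - Q \<longleftrightarrow> \<sigma> < t1"
proof -
  have "(a+1) * (1+\<sigma>) * (a/(a+1)) = a * (1+\<sigma>)" "(a+1) * (1+\<sigma>) * (1/(a+1)) = 1+\<sigma>"
    and "(a+1) * (1+\<sigma>) * qH = (a+1) * (1 - 2*Q) * \<sigma>"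
    using a \<sigma> by (simp_all add: qH_def)
  then have scaled1: "(a+1) * (1+\<sigma>) * (a/(a+1) - qH - Q) = (a - Q*(a+1)) - \<sigma> * (1 - Q*(a+1))"
    and scaled2: "(a+1) * (1+\<sigma>) * (1/(a+1) - qH - Q) = (1 - Q*(a+1)) - \<sigma> * (a - Q*(a+1))"
    by (simp_all only: right_diff_distrib) (simp_all add: algebra_simps)
  have pos: "0 < 1 - Q*(a+1)" "0 < (a+1) * (1+\<sigma>)" "0 < a - Q*(a+1)"
    using a \<sigma> Q by auto
  show "0 \<le> a/(a+1) - qH - Q \<longleftrightarrow> \<sigma> \<le> t2" "0 < a/(a+1) - qH - Q \<longleftrightarrow> \<sigma> < t2"
    unfolding t2_def using sign_of_scaled_eq[OF pos(1,2) scaled1] by blast+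
  show "0 \<le> 1/(a+1) - qH - Q \<longleftrightarrow> \<sigma> \<le> t1" "0 < 1/(a+1) - qH - Q \<longleftrightarrow> \<sigma> < t1"
    unfolding t1_def using sign_of_scaled_eq[OF pos(3,2) scaled2] by blast+
qed

lemma rec_value_power_cdf_shape:
  fixes a \<sigma> Q :: real
  defines "qH \<equiv> (1 - 2*Q) * \<sigma> / (1 + \<sigma>)"
    and "t1 \<equiv> (1 - Q*(a+1)) / (a - Q*(a+1))" and "t2 \<equiv> (a - Q*(a+1)) / (1 - Q*(a+1))"
  assumes a: "0 < a" and \<sigma>: "0 < \<sigma>" and Q: "0 < Q" "Q < 1/2" "Q*(a+1) < a" "Q*(a+1) < 1"
    and informative: "(qH + 2*Q) * (qH + Q) \<le> qH"
  shows "(\<sigma> \<le> min t1 t2 \<longrightarrow> antimono_on {0<..<1} (rec_value (power_cdf a) qH Q Q))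
       \<and> (\<sigma> \<ge> max t1 t2 \<longrightarrow> mono_on {0<..<1} (rec_value (power_cdf a) qH Q Q))
       \<and> (min t1 t2 < \<sigma> \<and> \<sigma> < max t1 t2 \<longrightarrow>
            (\<exists>Rs\<in>{0<..<1}. \<forall>R\<in>{0<..<1}. rec_value (power_cdf a) qH Q Q R \<le> rec_value (power_cdf a) qH Q Q Rs))"
proof -
  define c1 c2 where "c1 = a/(a+1) - qH - Q" and "c2 = 1/(a+1) - qH - Q"
  have "0 < qH" "qH + 2*Q < 1"
    using \<sigma> Q by (simp_all add: qH_def field_simps)
  then have "\<forall>R\<in>{0<..<1}. rec_value (power_cdf a) qH Q Q R
      = qH * (1 - qH - Q) + Q * c1 + (Q * c2) * (1 - R) powr a - (Q * c1) * R powr a"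
    using rec_value_power_cdf[OF a _ Q(1) _ informative] by (simp add: c1_def c2_def algebra_simps)
  note shape = powr_profile_shape[OF a this]
  note c1 = profile_coefficient_signs(1,2)[OF a \<sigma> Q(3,4), folded qH_def t2_def c1_def]
  note c2 = profile_coefficient_signs(3,4)[OF a \<sigma> Q(3,4), folded qH_def t1_def c2_def]
  have c12: "c2 < c1 \<longleftrightarrow> 1 < a" "c1 < c2 \<longleftrightarrow> a < 1"
    using a by (simp_all add: c1_def c2_def divide_less_cancel)
  show ?thesis
  proof (intro conjI impI)
    assume "\<sigma> \<le> min t1 t2"
    then have "0 \<le> Q * c2" "0 \<le> Q * c1"
      using c1(1) c2(1) Q(1) by auto
    then show "antimono_on {0<..<1} (rec_value (power_cdf a) qH Q Q)"
      by (rule shape(1))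
  next
    assume "max t1 t2 \<le> \<sigma>"
    then have "Q * c2 \<le> 0" "Q * c1 \<le> 0"
      using c1(2) c2(2) Q(1) by (auto simp: mult_nonneg_nonpos)
    then show "mono_on {0<..<1} (rec_value (power_cdf a) qH Q Q)"
      by (rule shape(2))
  next
    assume between: "min t1 t2 < \<sigma> \<and> \<sigma> < max t1 t2"
    have "(0 < c1 \<and> c2 < 0 \<and> 1 < a) \<or> (c1 < 0 \<and> 0 < c2 \<and> a < 1)"
    proof (cases "t1 \<le> t2")
      case True
      then show ?thesis
        using between c1(2) c2(1) c12(1) by auto
    next
      case False
      then show ?thesis
        using between c1(1) c2(2) c12(2) by auto
    qed
    then have "(0 < Q * c1 \<and> Q * c2 < 0 \<and> 1 < a) \<or> (Q * c1 < 0 \<and> 0 < Q * c2 \<and> a < 1)"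
      using Q(1) by (auto simp: mult_pos_neg)
    then show "\<exists>Rs\<in>{0<..<1}. \<forall>R\<in>{0<..<1}. rec_value (power_cdf a) qH Q Q R \<le> rec_value (power_cdf a) qH Q Q Rs"
      by (rule shape(3))
  qed
qed

theorem proposition7:
  fixes a \<sigma> :: real
  assumes "a > 0" and "\<sigma> > 0"
  shows "eventually (\<lambda>Q.
    let F = power_cdf a;
        qH = (1 - 2*Q) * \<sigma> / (1 + \<sigma>);
        V = rec_value F qH Q Q;
        t1 = (1 - Q*(a+1)) / (a - Q*(a+1));
        t2 = (a - Q*(a+1)) / (1 - Q*(a+1))
    in (\<sigma> \<le> min t1 t2 \<longrightarrow> antimono_on {0<..<1} V)
     \<and> (\<sigma> \<ge> max t1 t2 \<longrightarrow> mono_on {0<..<1} V)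
     \<and> (min t1 t2 < \<sigma> \<and> \<sigma> < max t1 t2 \<longrightarrow>
          (\<exists>Rs\<in>{0<..<1}. \<forall>R\<in>{0<..<1}. V R \<le> V Rs)))
    (at_right (0::real))"
proof -
  define qH where "qH Q = (1 - 2*Q) * \<sigma> / (1 + \<sigma>)" for Q :: real
  have "\<forall>\<^sub>F Q in at_right 0. Q \<in> {0<..<min (1/2) (min a 1 / (a+1))}"
    by (rule eventually_at_right_real) (use assms in simp)
  moreover have "\<forall>\<^sub>F Q in at_right 0. (qH Q + 2*Q) * (qH Q + Q) < qH Q"
  proof -
    have "((\<lambda>Q. qH Q - (qH Q + 2*Q) * (qH Q + Q)) \<longlongrightarrow> qH 0 - (qH 0 + 2*0) * (qH 0 + 0)) (at_right 0)"
      unfolding qH_def by (intro tendsto_intros) (use assms in auto)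
    moreover have "0 < qH 0 * (1 - qH 0)"
      using assms by (simp add: qH_def)
    then have "0 < qH 0 - (qH 0 + 2*0) * (qH 0 + 0)"
      by (simp add: algebra_simps)
    ultimately show ?thesis
      by (rule order_tendstoD(1)[THEN eventually_mono]) simp
  qed
  ultimately show ?thesis
    unfolding Let_def
  proof eventually_elim
    case (elim Q)
    then have "Q*(a+1) < a" "Q*(a+1) < 1"
      using assms by (auto simp: less_divide_eq)
    with elim show ?case
      unfolding qH_def by (intro rec_value_power_cdf_shape assms) auto
  qed
qed

end
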